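(* Let $v\ge2$. An optimum $(d,2)$-CDA$((d+1)v^2;5,v)$ exists for every positive integer $d$ with $d+1\le v$, except possibly in the following cases: (1) $(d,v)\in\{(2,6),(4,6)\}$; (2) $v=6u$ and $d=v-2$, where $u\ne1$ and $\gcd(u,6)=1$.
   Context: Consecutive $t$-way interaction in an $N\times k$ array $A=(a_{ij})$ over a $v$-set $V$: $T=\{(i,x_i),\dots,(i+t-1,x_{i+t-1})\}$, $1\le i\le k-t+1$, $x_r\in V$; $\rho(A,T)=\{r: a_{r,j}=x_j\ \forall (j,x_j)\in T\}$, $\rho(A,\mathcal T)=\bigcup_{T\in\mathcal T}\rho(A,T)$. A $(d,t)$-CDA$(N;k,v)$ is an $N\times k$ array over $V$ in which every $t$ consecutive columns contain every $t$-tuple at least once, and such that for every set $\mathcal T$ of exactly $d$ distinct consecutive $t$-way interactions and every consecutive $t$-way interaction $T$: $\rho(A,T)\subseteq\rho(A,\mathcal T)$ iff $T\in\mathcal T$. It is optimum if $N=(d+1)v^t$. *)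

theory Defs
  imports Main
begin

text \<open>An N x k array over V is a function A :: nat => nat => 'a, where A r j is the
entry in row r < N and column j < k (0-based).\<close>

definition is_array :: "nat \<Rightarrow> nat \<Rightarrow> 'a set \<Rightarrow> (nat \<Rightarrow> nat \<Rightarrow> 'a) \<Rightarrow> bool" where
  "is_array N k V A \<longleftrightarrow> (\<forall>r<N. \<forall>j<k. A r j \<in> V)"

definition cons_interaction :: "nat \<Rightarrow> nat \<Rightarrow> 'a set \<Rightarrow> (nat \<times> 'a) set \<Rightarrow> bool" where
  "cons_interaction k t V T \<longleftrightarrow>
     (\<exists>i xs. i + t \<le> k \<and> length xs = t \<and> set xs \<subseteq> V \<and>
             T = {(i + j, xs ! j) | j. j < t})"

definition rho :: "nat \<Rightarrow> (nat \<Rightarrow> nat \<Rightarrow> 'a) \<Rightarrow> (nat \<times> 'a) set \<Rightarrow> nat set" where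
  "rho N A T = {r. r < N \<and> (\<forall>(j, x) \<in> T. A r j = x)}"

definition rho_set :: "nat \<Rightarrow> (nat \<Rightarrow> nat \<Rightarrow> 'a) \<Rightarrow> (nat \<times> 'a) set set \<Rightarrow> nat set" where
  "rho_set N A TT = (\<Union>T\<in>TT. rho N A T)"

definition is_CDA :: "nat \<Rightarrow> nat \<Rightarrow> nat \<Rightarrow> nat \<Rightarrow> 'a set \<Rightarrow> (nat \<Rightarrow> nat \<Rightarrow> 'a) \<Rightarrow> bool" where
  "is_CDA d t N k V A \<longleftrightarrow>
     is_array N k V A \<and>
     (\<forall>i xs. i + t \<le> k \<longrightarrow> length xs = t \<longrightarrow> set xs \<subseteq> V \<longrightarrow>
        (\<exists>r<N. \<forall>j<t. A r (i + j) = xs ! j)) \<and>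
     (\<forall>TT T. (\<forall>S\<in>TT. cons_interaction k t V S) \<and> finite TT \<and> card TT = d \<and>
             cons_interaction k t V T \<longrightarrow>
             (rho N A T \<subseteq> rho_set N A TT \<longleftrightarrow> T \<in> TT))"

end

theory Submission
  imports Defs
begin

(* Index the rows by triples (s, x, y) with s \<le> d and x, y < v, and let row (s, x, y)
read x, y, x + y + s, y + s, x + s modulo v. For fixed s every pair of consecutive columns
is a bijection of (Z/v)^2, so each consecutive 2-way interaction occurs in exactly d + 1 rows,
one for each s. Two distinct pairs of consecutive columns together determine s and hence the
whole row, so distinct interactions share at most one row. Consequently the rows of an
interaction outside a set of d interactions cannot be covered by the rows of that set.
The construction works for every d < v; the exceptional cases excluded by the hypotheses
are not needed. *)

lemma rho_finite: "finite (rho N A T)"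
  unfolding rho_def by simp

lemma rho_subset_rho_set_imp_mem:
  assumes "finite TT" "card TT \<le> d" "d < card (rho N A T)"
    and "\<And>S. S \<in> TT \<Longrightarrow> S \<noteq> T \<Longrightarrow> card (rho N A T \<inter> rho N A S) \<le> 1"
    and "rho N A T \<subseteq> rho_set N A TT"
  shows "T \<in> TT"
proof (rule ccontr)
  assume "T \<notin> TT"
  have "rho N A T = (\<Union>S\<in>TT. rho N A T \<inter> rho N A S)"
    using assms(5) unfolding rho_set_def by blast
  then have "card (rho N A T) \<le> (\<Sum>S\<in>TT. card (rho N A T \<inter> rho N A S))"
    by (metis card_UN_le assms(1))
  also have "\<dots> \<le> (\<Sum>S\<in>TT. 1)"
    using assms(4) \<open>T \<notin> TT\<close> by (intro sum_mono) blast
  also have "\<dots> \<le> d" using assms(2) by simp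
  finally show False using assms(3) by simp
qed

lemma cons_interaction_2_iff:
  "cons_interaction k 2 V T \<longleftrightarrow>
     (\<exists>i a b. i + 2 \<le> k \<and> a \<in> V \<and> b \<in> V \<and> T = {(i, a), (i + 1, b)})"
proof
  assume "cons_interaction k 2 V T"
  then obtain i xs where "i + 2 \<le> k" "length xs = 2" "set xs \<subseteq> V"
    and T: "T = {(i + j, xs ! j) | j. j < 2}"
    unfolding cons_interaction_def by blast
  moreover have "xs ! 0 \<in> V" "xs ! 1 \<in> V"
    using \<open>length xs = 2\<close> \<open>set xs \<subseteq> V\<close> nth_mem[of 0 xs] nth_mem[of 1 xs] by auto
  moreover have "T = {(i, xs ! 0), (i + 1, xs ! 1)}"
    unfolding T by (auto simp: less_2_cases_iff)
  ultimately show "\<exists>i a b. i + 2 \<le> k \<and> a \<in> V \<and> b \<in> V \<and> T = {(i, a), (i + 1, b)}"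
    by blast
next
  assume "\<exists>i a b. i + 2 \<le> k \<and> a \<in> V \<and> b \<in> V \<and> T = {(i, a), (i + 1, b)}"
  then obtain i a b where "i + 2 \<le> k" "a \<in> V" "b \<in> V" and T: "T = {(i, a), (i + 1, b)}"
    by blast
  moreover have "T = {(i + j, [a, b] ! j) | j. j < 2}"
    unfolding T by (auto simp: less_2_cases_iff)
  ultimately show "cons_interaction k 2 V T"
    unfolding cons_interaction_def by (intro exI[of _ i] exI[of _ "[a, b]"]) auto
qed

lemma rho_pair: "rho N A {(i, a), (j, b)} = {r. r < N \<and> A r i = a \<and> A r j = b}"
  unfolding rho_def by auto

lemma mod_eq_iff_int_dvd: "a mod v = b mod v \<longleftrightarrow> int v dvd int a - int b"
  by (metis mod_eq_dvd_iff of_nat_eq_iff of_nat_mod)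

lemma eq_if_int_dvd_diff:
  assumes "a < v" "b < v" "int v dvd int a - int b"
  shows "a = b"
  using assms mod_eq_iff_int_dvd[of a v b] by simp

definition cda_form :: "nat \<Rightarrow> nat \<Rightarrow> nat \<Rightarrow> nat \<Rightarrow> nat" where
  "cda_form s x y j = [x, y, x + y + s, y + s, x + s] ! j"

lemma cda_form_pair_inj:
  assumes "i \<le> 3" "x < v" "y < v" "x' < v" "y' < v"
    and agree: "\<And>j. j \<in> {i, i + 1} \<Longrightarrow> cda_form s x y j mod v = cda_form s x' y' j mod v"
  shows "x = x' \<and> y = y'"
proof -
  have dvd: "int v dvd int (cda_form s x y j) - int (cda_form s x' y' j)" if "j \<in> {i, i + 1}" for j
    using agree[OF that] by (simp only: mod_eq_iff_int_dvd)
  have "int v dvd int x - int x' \<and> int v dvd int y - int y'"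
  proof -
    consider "i = 0" | "i = 1" | "i = 2" | "i = 3" using assms(1) by linarith
    then show ?thesis
    proof cases
      case 1
      then show ?thesis using dvd[of 0] dvd[of 1] by (simp add: cda_form_def)
    next
      case 2
      then show ?thesis using dvd[of 1] dvd[of 2] dvd_diff[OF dvd[of 2] dvd[of 1]]
        by (simp add: cda_form_def algebra_simps)
    next
      case 3
      then show ?thesis using dvd[of 2] dvd[of 3] dvd_diff[OF dvd[of 2] dvd[of 3]]
        by (simp add: cda_form_def algebra_simps)
    next
      case 4
      then show ?thesis using dvd[of 3] dvd[of 4]
        by (simp add: cda_form_def algebra_simps)
    qed
  qed
  then show ?thesis using assms(2-5) eq_if_int_dvd_diff by blast
qed

lemma cda_form_two_pairs_determine_shift:
  assumes "i \<le> 3" "i' \<le> 3" "i \<noteq> i'" "s < v" "s' < v"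
    and agree: "\<And>j. j \<in> {i, i + 1, i', i' + 1} \<Longrightarrow>
      cda_form s x y j mod v = cda_form s' x' y' j mod v"
  shows "s = s'"
proof -
  let ?J = "{i, i + 1, i', i' + 1}"
  have dvd: "int v dvd int (cda_form s x y j) - int (cda_form s' x' y' j)" if "j \<in> ?J" for j
    using agree[OF that] by (simp only: mod_eq_iff_int_dvd)
  consider "1 \<in> ?J" "3 \<in> ?J" | "0 \<in> ?J" "1 \<in> ?J" "2 \<in> ?J" | "2 \<in> ?J" "3 \<in> ?J" "4 \<in> ?J"
  proof -
    have "i \<in> {0, 1, 2, 3}" "i' \<in> {0, 1, 2, 3}" using assms(1,2) by auto
    with assms(3) show thesis using that by auto
  qed
  then have "int v dvd int s - int s'"
  proof cases
    case 1
    then show ?thesis using dvd_diff[OF dvd[of 3] dvd[of 1]] by (simp add: cda_form_def algebra_simps)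
  next
    case 2
    then show ?thesis using dvd_diff[OF dvd_diff[OF dvd[of 2] dvd[of 0]] dvd[of 1]]
      by (simp add: cda_form_def algebra_simps)
  next
    case 3
    then show ?thesis using dvd_diff[OF dvd_add[OF dvd[of 3] dvd[of 4]] dvd[of 2]]
      by (simp add: cda_form_def algebra_simps)
  qed
  then show ?thesis using assms(4,5) eq_if_int_dvd_diff by blast
qed

lemma cda_form_pair_surj:
  assumes "i \<le> 3" "a < v" "b < v"
  shows "\<exists>x<v. \<exists>y<v. cda_form s x y i mod v = a \<and> cda_form s x y (i + 1) mod v = b"
proof -
  define f where "f = (\<lambda>(x, y). (cda_form s x y i mod v, cda_form s x y (i + 1) mod v))"
  let ?A = "{..<v} \<times> {..<v}"
  have "f ` ?A \<subseteq> ?A" using assms(2) by (auto simp: f_def)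
  moreover have "inj_on f ?A"
  proof (rule inj_onI)
    fix p q assume "p \<in> ?A" "q \<in> ?A" "f p = f q"
    then show "p = q"
      using cda_form_pair_inj[OF assms(1), of "fst p" v "snd p" "fst q" "snd q" s]
      by (auto simp: f_def split: prod.splits)
  qed
  ultimately have "f ` ?A = ?A" by (intro endo_inj_surj) auto
  then have "(a, b) \<in> f ` ?A" using assms(2,3) by simp
  then show ?thesis unfolding f_def by fast
qed

definition cda_row :: "nat \<Rightarrow> nat \<Rightarrow> nat \<Rightarrow> nat \<Rightarrow> nat" where
  "cda_row v s x y = (s * v + x) * v + y"

definition cda_array :: "nat \<Rightarrow> nat \<Rightarrow> nat \<Rightarrow> nat" where
  "cda_array v r j = cda_form (r div v div v) (r div v mod v) (r mod v) j mod v"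

lemma cda_row_digits:
  assumes "x < v" "y < v"
  shows "cda_row v s x y div v div v = s" "cda_row v s x y div v mod v = x" "cda_row v s x y mod v = y"
proof -
  have "cda_row v s x y div v = s * v + x" using assms by (simp add: cda_row_def)
  then show "cda_row v s x y div v div v = s" "cda_row v s x y div v mod v = x"
    using assms(1) by simp_all
  show "cda_row v s x y mod v = y" using assms(2) by (simp add: cda_row_def)
qed

lemma cda_row_less:
  assumes "s < n" "x < v" "y < v"
  shows "cda_row v s x y < n * v\<^sup>2"
proof -
  have "cda_row v s x y < (s * v + x + 1) * v" using assms(3) by (simp add: cda_row_def)
  also have "\<dots> \<le> (s * v + v) * v" using assms(2) by (intro mult_le_mono1) simp
  also have "\<dots> = (s + 1) * v\<^sup>2" by (simp add: power2_eq_square algebra_simps)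
  also have "\<dots> \<le> n * v\<^sup>2" using assms(1) by (intro mult_le_mono1) simp
  finally show ?thesis .
qed

lemma cda_row_cases:
  assumes "r < n * v\<^sup>2"
  obtains s x y where "s < n" "x < v" "y < v" "r = cda_row v s x y"
proof
  have "0 < v" using assms by (cases v) auto
  then show "r div v mod v < v" "r mod v < v" by simp_all
  have "r div v div v = r div v\<^sup>2" by (simp add: div_mult2_eq power2_eq_square)
  then show "r div v div v < n" using assms by (simp add: less_mult_imp_div_less)
  show "r = cda_row v (r div v div v) (r div v mod v) (r mod v)"
    unfolding cda_row_def using div_mult_mod_eq[of r v] div_mult_mod_eq[of "r div v" v] by simp
qed

lemma cda_array_cda_row:
  assumes "x < v" "y < v"
  shows "cda_array v (cda_row v s x y) j = cda_form s x y j mod v"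
  unfolding cda_array_def cda_row_digits[OF assms] ..

lemma cda_array_less: "0 < v \<Longrightarrow> cda_array v r j < v"
  by (simp add: cda_array_def)

lemma cda_array_covers_pair:
  assumes "i \<le> 3" "a < v" "b < v" "s < n"
  shows "\<exists>r<n * v\<^sup>2. cda_array v r i = a \<and> cda_array v r (i + 1) = b \<and> r div v div v = s"
proof -
  obtain x y where "x < v" "y < v" "cda_form s x y i mod v = a" "cda_form s x y (i + 1) mod v = b"
    using cda_form_pair_surj[OF assms(1-3)] by blast
  then show ?thesis
    using cda_row_less[OF assms(4)] by (metis cda_array_cda_row cda_row_digits(1))
qed

lemma card_rho_cda_array:
  assumes "cons_interaction 5 2 {..<v} T" "n \<le> v"
  shows "n \<le> card (rho (n * v\<^sup>2) (cda_array v) T)"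
proof -
  obtain i a b where "i \<le> 3" "a < v" "b < v" and T: "T = {(i, a), (i + 1, b)}"
    using assms(1) unfolding cons_interaction_2_iff by auto
  then have "\<forall>s\<in>{..<n}. \<exists>r\<in>rho (n * v\<^sup>2) (cda_array v) T. r div v div v = s"
    using cda_array_covers_pair by (fastforce simp: rho_pair)
  then obtain row where row: "\<And>s. s < n \<Longrightarrow> row s \<in> rho (n * v\<^sup>2) (cda_array v) T \<and> row s div v div v = s"
    by (metis lessThan_iff)
  then have "inj_on row {..<n}" by (metis inj_onI lessThan_iff)
  moreover have "row ` {..<n} \<subseteq> rho (n * v\<^sup>2) (cda_array v) T" using row by auto
  ultimately have "card (row ` {..<n}) \<le> card (rho (n * v\<^sup>2) (cda_array v) T)"
    by (intro card_mono rho_finite)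
  then show ?thesis by (simp add: card_image \<open>inj_on row {..<n}\<close>)
qed

lemma card_rho_inter_cda_array:
  assumes "cons_interaction 5 2 {..<v} T" "cons_interaction 5 2 {..<v} T'" "T \<noteq> T'" "n \<le> v"
  shows "card (rho (n * v\<^sup>2) (cda_array v) T \<inter> rho (n * v\<^sup>2) (cda_array v) T') \<le> 1"
proof -
  let ?R = "rho (n * v\<^sup>2) (cda_array v) T \<inter> rho (n * v\<^sup>2) (cda_array v) T'"
  obtain i a b where "i \<le> 3" and T: "T = {(i, a), (i + 1, b)}"
    using assms(1) unfolding cons_interaction_2_iff by auto
  obtain i' a' b' where "i' \<le> 3" and T': "T' = {(i', a'), (i' + 1, b')}"
    using assms(2) unfolding cons_interaction_2_iff by auto
  have "r = r'" if "r \<in> ?R" "r' \<in> ?R" for r r'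
  proof -
    have "r < n * v\<^sup>2" "r' < n * v\<^sup>2" using that by (simp_all add: rho_def)
    obtain s x y where "s < n" "x < v" "y < v" and r: "r = cda_row v s x y"
      using cda_row_cases[OF \<open>r < n * v\<^sup>2\<close>] .
    obtain s' x' y' where "s' < n" "x' < v" "y' < v" and r': "r' = cda_row v s' x' y'"
      using cda_row_cases[OF \<open>r' < n * v\<^sup>2\<close>] .
    have agree: "cda_form s x y j mod v = cda_form s' x' y' j mod v" if "j \<in> {i, i + 1, i', i' + 1}" for j
      using that \<open>r \<in> ?R\<close> \<open>r' \<in> ?R\<close>
      unfolding r r' T T' rho_pair
      by (auto simp: cda_array_cda_row \<open>x < v\<close> \<open>y < v\<close> \<open>x' < v\<close> \<open>y' < v\<close>)
    have "i \<noteq> i'"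
      using that(1) assms(3) unfolding T T' rho_pair by auto
    then have "s = s'"
      using cda_form_two_pairs_determine_shift \<open>i \<le> 3\<close> \<open>i' \<le> 3\<close> \<open>s < n\<close> \<open>s' < n\<close> assms(4) agree
      by (metis order_less_le_trans)
    then have "x = x' \<and> y = y'"
      using cda_form_pair_inj[OF \<open>i \<le> 3\<close> \<open>x < v\<close> \<open>y < v\<close> \<open>x' < v\<close> \<open>y' < v\<close>] agree by blast
    then show ?thesis using r r' \<open>s = s'\<close> by simp
  qed
  then show ?thesis using card_le_Suc0_iff_eq[of ?R] by (simp add: rho_finite)
qed

lemma cda_array_is_CDA:
  assumes "d + 1 \<le> v"
  shows "is_CDA d 2 ((d + 1) * v\<^sup>2) 5 {..<v} (cda_array v)"
  unfolding is_CDA_def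
proof (intro conjI allI impI)
  let ?N = "(d + 1) * v\<^sup>2"
  show "is_array ?N 5 {..<v} (cda_array v)"
    using assms by (simp add: is_array_def cda_array_less)
  fix i :: nat and xs :: "nat list"
  assume "i + 2 \<le> 5" "length xs = 2" "set xs \<subseteq> {..<v}"
  then have "cons_interaction 5 2 {..<v} {(i + j, xs ! j) | j. j < 2}"
    unfolding cons_interaction_def by blast
  then have "rho ?N (cda_array v) {(i + j, xs ! j) | j. j < 2} \<noteq> {}"
    using card_rho_cda_array[OF _ assms] by fastforce
  then show "\<exists>r<?N. \<forall>j<2. cda_array v r (i + j) = xs ! j"
    by (auto simp: rho_def)
next
  let ?N = "(d + 1) * v\<^sup>2"
  fix TT T
  assume TT: "(\<forall>S\<in>TT. cons_interaction 5 2 {..<v} S) \<and> finite TT \<and> card TT = d \<and>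
    cons_interaction 5 2 {..<v} T"
  show "rho ?N (cda_array v) T \<subseteq> rho_set ?N (cda_array v) TT \<longleftrightarrow> T \<in> TT"
  proof
    assume "rho ?N (cda_array v) T \<subseteq> rho_set ?N (cda_array v) TT"
    moreover have "d < card (rho ?N (cda_array v) T)"
      using card_rho_cda_array[OF _ assms] TT by (simp add: Suc_le_eq)
    moreover have "card (rho ?N (cda_array v) T \<inter> rho ?N (cda_array v) S) \<le> 1"
      if "S \<in> TT" "S \<noteq> T" for S
      using card_rho_inter_cda_array[OF _ _ _ assms] TT that by metis
    ultimately show "T \<in> TT"
      using TT rho_subset_rho_set_imp_mem[of TT d] by simp
  qed (auto simp: rho_set_def)
qed

theorem mainTheorem19:
  fixes v d :: nat
  assumes "v \<ge> 2" and "d > 0" and "d + 1 \<le> v"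
    and "(d, v) \<notin> {(2, 6), (4, 6)}"
    and "\<not> (\<exists>u. v = 6 * u \<and> d = v - 2 \<and> u \<noteq> 1 \<and> coprime u 6)"
  shows "\<exists>A :: nat \<Rightarrow> nat \<Rightarrow> nat. is_CDA d 2 ((d + 1) * v ^ 2) 5 {..<v} A"
  using cda_array_is_CDA[OF assms(3)] by blast

end
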